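(* For every odd positive integer $m$, the set of nonnegative integers $s$ such that $m\nmid \binom{2^{s+1}}{2^s}$ has asymptotic density $0$; that is, $\#\{0\le s<a : m\nmid \binom{2^{s+1}}{2^s}\}/a\to 0$ as $a\to\infty$. *)

theory Defs
  imports Complex_Main
begin

end

theory Submission
  imports Defs "HOL-Number_Theory.Number_Theory"
begin

text \<open>Fix an odd prime \<open>p\<close> dividing \<open>m\<close> and let \<open>k\<close> be its multiplicity. By Legendre's
  formula, every base-\<open>p\<close> digit \<open>d\<close> of \<open>n\<close> with \<open>p < 2 d\<close> produces a carry when \<open>n\<close> is
  doubled and contributes a factor \<open>p\<close> to \<open>(2n choose n)\<close>; so \<open>p\<^sup>k\<close> divides
  \<open>(2\<^sup>s\<^sup>+\<^sup>1 choose 2\<^sup>s)\<close> as soon as \<open>2\<^sup>s\<close> has \<open>k\<close> such digits.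

  Write \<open>2\<^sup>T = 1 + p\<^sup>e u\<close> with \<open>e \<ge> 2\<close> and \<open>p\<close> not dividing \<open>u\<close>. Lifting the exponent
  shows that \<open>1 + p\<^sup>e u\<close> has order \<open>p\<^sup>N\<close> modulo \<open>p\<^sup>e\<^sup>+\<^sup>N\<close>, so while \<open>s\<close> runs through
  one period \<open>T p\<^sup>N\<close> the pair (\<open>s mod T\<close>, digits \<open>e, \<dots>, e + N - 1\<close> of \<open>2\<^sup>s\<close>) takes
  every value at most once. Hence the proportion of \<open>s\<close> for which this block has fewer
  than \<open>k\<close> big digits is at most the probability that \<open>N\<close> trials with success probability
  \<open>#{d < p. p < 2 d} / p > 0\<close> give fewer than \<open>k\<close> successes, which tends to \<open>0\<close>.
  A finite union over the prime factors of \<open>m\<close> finishes the proof.\<close>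

section \<open>Digits, Legendre's formula and carries\<close>

lemma mod_mult_div_eq_div_mod: "(n::nat) mod (a * b) div a = n div a mod b"
proof (cases "a = 0")
  case False
  have "n mod (a * b) = n mod a + (n div a mod b) * a"
    by (simp add: mod_mult2_eq algebra_simps)
  with False show ?thesis by simp
qed simp

lemma cong_mult_iff_cong_div:
  fixes x y a b :: nat
  shows "[x = y] (mod a * b) \<longleftrightarrow> [x = y] (mod a) \<and> [x div a = y div a] (mod b)"
  unfolding cong_def
proof
  assume "x mod (a * b) = y mod (a * b)"
  then have "x mod (a * b) mod a = y mod (a * b) mod a" "x mod (a * b) div a = y mod (a * b) div a"
    by simp_all
  then show "x mod a = y mod a \<and> x div a mod b = y div a mod b"
    by (simp add: mod_mult_div_eq_div_mod mod_mod_cancel)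
qed (simp add: mod_mult2_eq)

function legendre_sum :: "nat \<Rightarrow> nat \<Rightarrow> nat" where
  "legendre_sum p n = (if p \<le> 1 \<or> n = 0 then 0 else n div p + legendre_sum p (n div p))"
  by auto
termination by (relation "measure snd") auto

declare legendre_sum.simps [simp del]

lemma legendre_sum_0 [simp]: "legendre_sum p 0 = 0"
  by (subst legendre_sum.simps) simp

lemma legendre_sum_eq: "p > 1 \<Longrightarrow> legendre_sum p n = n div p + legendre_sum p (n div p)"
  by (subst legendre_sum.simps) auto

lemma legendre_sum_Suc:
  assumes p: "prime p"
  shows "legendre_sum p (Suc n) = legendre_sum p n + multiplicity p (Suc n)"
proof (induction n rule: less_induct)
  case (less n)
  have p1: "p > 1" using p prime_gt_1_nat by blast
  show ?case
  proof (cases "p dvd Suc n")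
    case False
    then have "Suc n div p = n div p"
      by (simp add: div_Suc dvd_eq_mod_eq_0)
    with False show ?thesis
      using legendre_sum_eq[OF p1, of n] legendre_sum_eq[OF p1, of "Suc n"]
      by (simp add: not_dvd_imp_multiplicity_0)
  next
    case True
    then obtain t where t: "Suc n = p * Suc t"
      using p1 by (metis dvd_def mult_0_right not0_implies_Suc nat.distinct(1))
    have "n = (p - 1) + t * p" using t p1 by (simp add: algebra_simps)
    then have "n div p = t" using p1 div_mult_self1[of p "p - 1" t] by simp
    moreover have "Suc n div p = Suc t" using t p1 by simp
    moreover have "t < n"
    proof -
      have "2 * Suc t \<le> Suc n" unfolding t using p1 by (intro mult_right_mono) auto
      then show ?thesis by simp
    qed
    moreover have "multiplicity p (Suc n) = Suc (multiplicity p (Suc t))"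
      unfolding t using p by (subst multiplicity_times_same) auto
    ultimately show ?thesis
      using less.IH[of t] legendre_sum_eq[OF p1, of n] legendre_sum_eq[OF p1, of "Suc n"]
      by simp
  qed
qed

lemma multiplicity_fact: "prime p \<Longrightarrow> multiplicity p (fact n :: nat) = legendre_sum p n"
proof (induction n)
  case (Suc n)
  have "multiplicity p (fact (Suc n) :: nat)
      = multiplicity p (Suc n) + multiplicity p (fact n :: nat)"
    unfolding fact_Suc of_nat_id using Suc.prems
    by (intro prime_elem_multiplicity_mult_distrib) auto
  with Suc show ?case by (simp add: legendre_sum_Suc)
qed simp

text \<open>A base-\<open>p\<close> digit \<open>d\<close> of \<open>n\<close> with \<open>p < 2 d\<close> produces a carry when \<open>n\<close> is
  doubled.\<close>

fun big_digits :: "nat \<Rightarrow> nat \<Rightarrow> nat \<Rightarrow> nat" where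
  "big_digits p 0 n = 0"
| "big_digits p (Suc N) n = (if p < 2 * (n mod p) then 1 else 0) + big_digits p N (n div p)"

lemma big_digits_0_right [simp]: "big_digits p N 0 = 0"
  by (induction N) auto

lemma big_digits_add: "big_digits p (M + N) n = big_digits p M n + big_digits p N (n div p ^ M)"
  by (induction M arbitrary: n) (auto simp: div_mult2_eq)

lemma big_digits_mod_power: "big_digits p N (n mod p ^ N) = big_digits p N n"
  by (induction N arbitrary: n) (simp_all add: mod_mult_div_eq_div_mod mod_mod_cancel)

lemma legendre_sum_double_ge:
  assumes "p > 1" and "c \<le> 1"
  shows "2 * legendre_sum p n + big_digits p N n \<le> legendre_sum p (2 * n + c)"
  using assms(2)
proof (induction n arbitrary: N c rule: less_induct)
  case (less n)
  show ?case
  proof (cases "n = 0")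
    case False
    define d where "d = n mod p"
    \<comment> \<open>the carry out of the lowest digit\<close>
    define c' where "c' = (2 * d + c) div p"
    have "2 * n + c = (2 * d + c) + 2 * (n div p) * p"
      unfolding d_def using div_mult_mod_eq[of n p] by linarith
    then have quot: "(2 * n + c) div p = 2 * (n div p) + c'"
      unfolding c'_def using assms(1) by (simp only:) (rule div_mult_self1, simp)
    have "2 * d + c < 2 * p"
      using assms(1) less.prems mod_less_divisor[of p n] unfolding d_def by linarith
    then have "c' \<le> 1" unfolding c'_def using less_mult_imp_div_less[of "2 * d + c" 2 p] by simp
    have carry: "1 \<le> c'" if "p < 2 * d"
      unfolding c'_def using that assms(1) by (simp add: div_greater_zero_iff Suc_le_eq)
    have IH: "2 * legendre_sum p (n div p) + big_digits p M (n div p)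
        \<le> legendre_sum p (2 * (n div p) + c')" for M
      using less.IH[of "n div p" c' M] False assms(1) \<open>c' \<le> 1\<close> by simp
    note unfold = quot legendre_sum_eq[OF assms(1), of n]
      legendre_sum_eq[OF assms(1), of "2 * n + c"]
    show ?thesis
    proof (cases N)
      case 0
      then show ?thesis using IH[of 0] unfold by simp
    next
      case (Suc M)
      then show ?thesis using IH[of M] carry unfold d_def by auto
    qed
  qed simp
qed

lemma prime_power_big_digits_dvd_central_binomial:
  assumes p: "prime p"
  shows "p ^ big_digits p N n dvd (2 * n choose n)"
proof -
  have p1: "p > 1" using p prime_gt_1_nat by blast
  have "fact (2 * n) = (fact n * fact n * (2 * n choose n) :: nat)"
    using binomial_fact_lemma[of n "2 * n"] by simp
  then have "legendre_sum p (2 * n) = 2 * legendre_sum p n + multiplicity p (2 * n choose n)"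
    using p by (simp add: prime_elem_multiplicity_mult_distrib flip: multiplicity_fact)
  moreover have "2 * legendre_sum p n + big_digits p N n \<le> legendre_sum p (2 * n + 0)"
    using legendre_sum_double_ge[OF p1] by blast
  ultimately show ?thesis
    by (intro multiplicity_dvd') simp
qed

section \<open>Lifting the exponent\<close>

lemma power_one_plus_mult_expand: "\<exists>w. (1 + q * v) ^ c = 1 + c * q * v + q\<^sup>2 * (w::nat)"
proof (induction c)
  case (Suc c)
  then obtain w where "(1 + q * v) ^ c = 1 + c * q * v + q\<^sup>2 * w" by blast
  then have "(1 + q * v) ^ Suc c = 1 + Suc c * q * v + q\<^sup>2 * (c * v\<^sup>2 + w + q * w * v)"
    by (simp add: algebra_simps power2_eq_square)
  then show ?case by blast
qed simp

lemma lift_exponent_step: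
  assumes "a \<ge> 2" and "\<not> p dvd v"
  shows "\<exists>v'. (1 + p ^ a * v) ^ p = 1 + p ^ (a + 1) * v' \<and> \<not> p dvd v'"
proof -
  obtain w where w: "(1 + p ^ a * v) ^ p = 1 + p * p ^ a * v + (p ^ a)\<^sup>2 * w"
    using power_one_plus_mult_expand[of "p ^ a" v p] by blast
  have "(p ^ a)\<^sup>2 = p ^ ((a + 1) + (a - 1))"
    using assms(1) by (simp add: power2_eq_square flip: power_add)
  also have "\<dots> = p ^ (a + 1) * p ^ (a - 1)"
    by (rule power_add)
  finally have "(p ^ a)\<^sup>2 = p ^ (a + 1) * p ^ (a - 1)" .
  then have "(1 + p ^ a * v) ^ p = 1 + p ^ (a + 1) * (v + p ^ (a - 1) * w)"
    using w by (simp add: algebra_simps)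
  moreover have "p dvd p ^ (a - 1) * w"
    using assms(1) by (simp add: dvd_power_iff_le)
  then have "\<not> p dvd v + p ^ (a - 1) * w"
    using assms(2) by (simp add: dvd_add_left_iff)
  ultimately show ?thesis by blast
qed

lemma lift_exponent:
  assumes "e \<ge> 2" and "\<not> p dvd u"
  shows "\<exists>u'. (1 + p ^ e * u) ^ p ^ j = 1 + p ^ (e + j) * u' \<and> \<not> p dvd u'"
proof (induction j)
  case (Suc j)
  then obtain u' where u': "(1 + p ^ e * u) ^ p ^ j = 1 + p ^ (e + j) * u'" "\<not> p dvd u'"
    by blast
  have "(1 + p ^ e * u) ^ p ^ Suc j = (1 + p ^ (e + j) * u') ^ p"
    by (simp only: power_Suc2 power_mult u'(1))
  then show ?case
    using lift_exponent_step[OF _ u'(2), of "e + j"] assms(1) by simp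
qed (use assms(2) in auto)

lemma ord_one_plus_prime_power:
  assumes p: "prime p" and "e \<ge> 2" and "\<not> p dvd u"
  shows "ord (p ^ (e + N)) (1 + p ^ e * u) = p ^ N"
proof -
  have p1: "p > 1" using p prime_gt_1_nat by blast
  have cong_iff: "[(1 + p ^ e * u) ^ p ^ j = 1] (mod p ^ (e + N)) \<longleftrightarrow> N \<le> j" for j
  proof -
    obtain u' where u': "(1 + p ^ e * u) ^ p ^ j = 1 + p ^ (e + j) * u'" "\<not> p dvd u'"
      using lift_exponent assms by blast
    have "p ^ (e + N) dvd p ^ (e + j) * u' \<longleftrightarrow> N \<le> j"
    proof
      assume dvd: "p ^ (e + N) dvd p ^ (e + j) * u'"
      show "N \<le> j"
      proof (rule ccontr)
        assume "\<not> N \<le> j"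
        then have "p ^ (e + Suc j) dvd p ^ (e + N)"
          by (intro le_imp_power_dvd) simp
        then have "p ^ (e + j) * p dvd p ^ (e + j) * u'"
          using dvd by (metis dvd_trans power_Suc2 add_Suc_right)
        then show False using u'(2) p1 by simp
      qed
    qed (simp add: le_imp_power_dvd)
    then show ?thesis
      unfolding u'(1) by (subst cong_altdef_nat) auto
  qed
  have "ord (p ^ (e + N)) (1 + p ^ e * u) dvd p ^ N"
    using cong_iff[of N] by (simp flip: ord_divides)
  then obtain j where "j \<le> N" and j: "ord (p ^ (e + N)) (1 + p ^ e * u) = p ^ j"
    using divides_primepow_nat[OF p] by blast
  moreover have "N \<le> j"
    using ord_works[of "1 + p ^ e * u" "p ^ (e + N)"] cong_iff[of j] j by simp
  ultimately show ?thesis by simp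
qed

lemma power_eq_one_plus_prime_power:
  fixes b p :: nat
  assumes p: "prime p" and "coprime b p" and "b > 1"
  obtains T e u where "T > 0" and "e \<ge> 2" and "\<not> p dvd u" and "b ^ T = 1 + p ^ e * u"
proof -
  define T where "T = totient (p ^ 2)"
  have "T > 0" unfolding T_def using p by (simp add: prime_gt_0_nat)
  have "[b ^ T = 1] (mod p ^ 2)"
    unfolding T_def using assms(2) by (intro euler_theorem) simp
  then have dvd: "p ^ 2 dvd b ^ T - 1" by (rule cong_to_1_nat)
  have "b ^ T > 1" using assms(3) \<open>T > 0\<close> by (rule one_less_power)
  then have nz: "b ^ T - 1 \<noteq> 0" by simp
  have "\<not> is_unit p" using p by (auto dest: prime_gt_1_nat)
  then obtain u where u: "b ^ T - 1 = p ^ multiplicity p (b ^ T - 1) * u" "\<not> p dvd u"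
    using multiplicity_decompose'[OF nz] by blast
  have "multiplicity p (b ^ T - 1) \<ge> 2"
    using multiplicity_geI[OF nz \<open>\<not> is_unit p\<close> dvd] .
  with u \<open>b ^ T > 1\<close> show ?thesis
    by (intro that[of T "multiplicity p (b ^ T - 1)" u] \<open>T > 0\<close>) simp_all
qed

lemma cong_power_add_mult_iff:
  assumes p: "prime p" and "e \<ge> 2" and u: "\<not> p dvd u" and b: "b ^ T = 1 + p ^ e * u"
  shows "[b ^ (r + T * c) = b ^ r] (mod p ^ (e + N)) \<longleftrightarrow> p ^ N dvd c"
proof -
  have "T \<noteq> 0" using b u prime_gt_0_nat[OF p] by (cases "T = 0") auto
  moreover have "[p ^ e * u = 0] (mod p)"
    using assms(2) by (simp add: cong_0_iff dvd_power)
  then have "[1 + p ^ e * u = 1] (mod p)"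
    using cong_add[OF cong_refl[of 1]] by fastforce
  then have "coprime (b ^ T) p"
    unfolding b by (rule cong_imp_coprime[OF cong_sym]) simp
  ultimately have "coprime (b ^ r) (p ^ (e + N))"
    by simp
  then have "[b ^ (r + T * c) = b ^ r] (mod p ^ (e + N))
      \<longleftrightarrow> [(1 + p ^ e * u) ^ c = 1] (mod p ^ (e + N))"
    using cong_mult_lcancel_nat[of "b ^ r" "p ^ (e + N)" "(1 + p ^ e * u) ^ c" 1]
    by (simp add: power_add power_mult b)
  also have "\<dots> \<longleftrightarrow> p ^ N dvd c"
    using ord_one_plus_prime_power[OF assms(1-3)] by (simp add: ord_divides')
  finally show ?thesis .
qed

section \<open>Counting digit blocks with few big digits\<close>

text \<open>The probability that \<open>N\<close> independent trials with success probability \<open>q\<close> yield fewer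
  than \<open>k\<close> successes.\<close>

fun binomial_lower_tail :: "real \<Rightarrow> nat \<Rightarrow> nat \<Rightarrow> real" where
  "binomial_lower_tail q 0 k = (if k = 0 then 0 else 1)"
| "binomial_lower_tail q (Suc N) 0 = 0"
| "binomial_lower_tail q (Suc N) (Suc k) =
     q * binomial_lower_tail q N k + (1 - q) * binomial_lower_tail q N (Suc k)"

lemma binomial_lower_tail_0_right [simp]: "binomial_lower_tail q N 0 = 0"
  by (cases N) auto

lemma binomial_lower_tail_bounds:
  assumes "0 \<le> q" and "q \<le> 1"
  shows "0 \<le> binomial_lower_tail q N k \<and> binomial_lower_tail q N k \<le> 1"
proof (induction N arbitrary: k)
  case (Suc N)
  show ?case
  proof (cases k)
    case (Suc k')
    have "q * binomial_lower_tail q N k' + (1 - q) * binomial_lower_tail q N k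
        \<le> q * 1 + (1 - q) * 1"
      using Suc.IH assms by (intro add_mono mult_left_mono) auto
    with Suc Suc.IH assms show ?thesis by simp
  qed simp
qed simp

lemma binomial_lower_tail_mono:
  assumes "0 \<le> q" and "q \<le> 1"
  shows "binomial_lower_tail q N k \<le> binomial_lower_tail q N (Suc k)"
proof (induction N arbitrary: k)
  case (Suc N)
  show ?case
  proof (cases k)
    case 0
    then show ?thesis using binomial_lower_tail_bounds[OF assms] assms by simp
  next
    case (Suc k')
    have "q * binomial_lower_tail q N k' + (1 - q) * binomial_lower_tail q N k
        \<le> q * binomial_lower_tail q N k + (1 - q) * binomial_lower_tail q N (Suc k)"
      using Suc.IH[of k'] Suc.IH[of k] assms \<open>k = Suc k'\<close>
      by (intro add_mono mult_left_mono) auto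
    with Suc show ?thesis by simp
  qed
qed simp

lemma binomial_lower_tail_tendsto_0:
  assumes "0 < q" and "q \<le> 1"
  shows "(\<lambda>N. binomial_lower_tail q N k) \<longlonglongrightarrow> 0"
proof (induction k)
  case (Suc k)
  have "decseq (\<lambda>N. binomial_lower_tail q N (Suc k))"
  proof (rule decseq_SucI)
    fix N
    have "q * binomial_lower_tail q N k + (1 - q) * binomial_lower_tail q N (Suc k)
        \<le> q * binomial_lower_tail q N (Suc k) + (1 - q) * binomial_lower_tail q N (Suc k)"
      using binomial_lower_tail_mono assms by (intro add_mono mult_left_mono) auto
    then show "binomial_lower_tail q (Suc N) (Suc k) \<le> binomial_lower_tail q N (Suc k)"
      by (simp add: algebra_simps)
  qed
  then obtain L where L: "(\<lambda>N. binomial_lower_tail q N (Suc k)) \<longlonglongrightarrow> L"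
    using decseq_convergent binomial_lower_tail_bounds assms by (metis less_imp_le)
  have "(\<lambda>N. binomial_lower_tail q (Suc N) (Suc k)) \<longlonglongrightarrow> q * 0 + (1 - q) * L"
    unfolding binomial_lower_tail.simps by (intro tendsto_intros Suc L)
  then have "L = q * 0 + (1 - q) * L"
    using LIMSEQ_unique LIMSEQ_Suc[OF L] by blast
  with assms have "L = 0" by (simp add: algebra_simps)
  with L show ?case by simp
qed simp

definition few_big_digits :: "nat \<Rightarrow> nat \<Rightarrow> nat \<Rightarrow> nat set" where
  "few_big_digits p N k = {w. w < p ^ N \<and> big_digits p N w < k}"

lemma finite_few_big_digits [simp]: "finite (few_big_digits p N k)"
  unfolding few_big_digits_def by simp

lemma card_few_big_digits_Suc_le:
  fixes p :: nat
  defines "D \<equiv> {d. d < p \<and> p < 2 * d}" and "D' \<equiv> {d. d < p \<and> \<not> p < 2 * d}"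
  shows "card (few_big_digits p (Suc N) (Suc k))
    \<le> card D * card (few_big_digits p N k) + card D' * card (few_big_digits p N (Suc k))"
proof -
  let ?W = "few_big_digits p N"
  have "few_big_digits p (Suc N) (Suc k)
      \<subseteq> (\<lambda>(d, w). d + p * w) ` (D \<times> ?W k \<union> D' \<times> ?W (Suc k))"
  proof
    fix x assume x: "x \<in> few_big_digits p (Suc N) (Suc k)"
    then have "p > 0" unfolding few_big_digits_def by (cases p) auto
    have "x div p < p ^ N" using x unfolding few_big_digits_def
      by (simp add: less_mult_imp_div_less mult.commute)
    with x \<open>p > 0\<close> have "(x mod p, x div p) \<in> D \<times> ?W k \<union> D' \<times> ?W (Suc k)"
      unfolding few_big_digits_def D_def D'_def by (auto split: if_splits)
    then show "x \<in> (\<lambda>(d, w). d + p * w) ` (D \<times> ?W k \<union> D' \<times> ?W (Suc k))"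
      by (rule image_eqI[rotated]) simp
  qed
  moreover have "finite D" "finite D'" unfolding D_def D'_def by simp_all
  ultimately have "card (few_big_digits p (Suc N) (Suc k))
      \<le> card ((\<lambda>(d, w). d + p * w) ` (D \<times> ?W k \<union> D' \<times> ?W (Suc k)))"
    by (intro card_mono) simp_all
  also have "\<dots> \<le> card (D \<times> ?W k \<union> D' \<times> ?W (Suc k))"
    by (rule card_image_le) (simp add: \<open>finite D\<close> \<open>finite D'\<close>)
  also have "\<dots> \<le> card (D \<times> ?W k) + card (D' \<times> ?W (Suc k))"
    by (rule card_Un_le)
  finally show ?thesis by (simp add: card_cartesian_product)
qed

definition big_digit_density :: "nat \<Rightarrow> real" where
  "big_digit_density p = real (card {d. d < p \<and> p < 2 * d}) / real p"

lemma big_digit_density_pos: "p > 2 \<Longrightarrow> big_digit_density p > 0"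
proof -
  assume "p > 2"
  then have "p - 1 \<in> {d. d < p \<and> p < 2 * d}" by auto
  then have "card {d. d < p \<and> p < 2 * d} > 0" by (auto simp: card_gt_0_iff)
  with \<open>p > 2\<close> show ?thesis unfolding big_digit_density_def by simp
qed

lemma big_digit_density_le_1: "big_digit_density p \<le> 1"
proof -
  have "card {d. d < p \<and> p < 2 * d} \<le> p"
    using card_mono[of "{..<p}" "{d. d < p \<and> p < 2 * d}"] by auto
  then show ?thesis unfolding big_digit_density_def by (simp add: divide_le_eq)
qed

lemma card_few_big_digits_le:
  fixes p :: nat
  assumes "p > 1"
  shows "real (card (few_big_digits p N k))
    \<le> real p ^ N * binomial_lower_tail (big_digit_density p) N k"
proof (induction N arbitrary: k)
  case 0
  then show ?case by (simp add: few_big_digits_def)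
next
  case (Suc N)
  define q where "q = big_digit_density p"
  define D where "D = {d. d < p \<and> p < 2 * d}"
  define D' where "D' = {d. d < p \<and> \<not> p < 2 * d}"
  have "D \<union> D' = {..<p}" and "D \<inter> D' = {}" unfolding D_def D'_def by auto
  then have "card D + card D' = p"
    by (metis card_Un_disjoint card_lessThan finite_Un finite_lessThan)
  then have "real (card D) + real (card D') = real p"
    by (simp flip: of_nat_add)
  moreover have "real p * q = card D"
    unfolding q_def big_digit_density_def D_def using assms(1) by simp
  ultimately have q: "real p * q = card D" "real p * (1 - q) = card D'"
    by (simp_all add: algebra_simps)
  show ?case
  proof (cases k)
    case (Suc k')
    have "real (card (few_big_digits p (Suc N) k))
        \<le> card D * real (card (few_big_digits p N k'))
          + card D' * real (card (few_big_digits p N k))"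
      using card_few_big_digits_Suc_le[of p N k'] Suc unfolding D_def D'_def
      by (simp flip: of_nat_mult of_nat_add)
    also have "\<dots> \<le> card D * (real p ^ N * binomial_lower_tail q N k')
        + card D' * (real p ^ N * binomial_lower_tail q N k)"
      using Suc.IH unfolding q_def by (intro add_mono mult_left_mono) auto
    also have "\<dots> = real p ^ Suc N * binomial_lower_tail q (Suc N) k"
      unfolding Suc q(1,2)[symmetric] by (simp add: algebra_simps)
    finally show ?thesis unfolding q_def .
  qed (simp add: few_big_digits_def)
qed

section \<open>Sets of density zero\<close>

definition zero_density :: "nat set \<Rightarrow> bool" where
  "zero_density B \<longleftrightarrow> (\<lambda>a. real (card {s. s < a \<and> s \<in> B}) / real a) \<longlonglongrightarrow> 0"

lemma zero_density_subset:
  assumes "zero_density B" and "A \<subseteq> B"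
  shows "zero_density A"
  unfolding zero_density_def
proof (rule tendsto_sandwich[OF _ _ tendsto_const assms(1)[unfolded zero_density_def]])
  have "card {s. s < a \<and> s \<in> A} \<le> card {s. s < a \<and> s \<in> B}" for a
    using assms(2) by (intro card_mono) auto
  then show "\<forall>\<^sub>F a in sequentially. real (card {s. s < a \<and> s \<in> A}) / real a
      \<le> real (card {s. s < a \<and> s \<in> B}) / real a"
    by (intro always_eventually allI divide_right_mono) auto
qed simp

lemma zero_density_UN:
  assumes "finite I" and "\<And>i. i \<in> I \<Longrightarrow> zero_density (B i)"
  shows "zero_density (\<Union>i\<in>I. B i)"
  unfolding zero_density_def
proof (rule tendsto_sandwich[OF _ _ tendsto_const tendsto_null_sum])
  have card_le:
    "card {s. s < a \<and> s \<in> (\<Union>i\<in>I. B i)} \<le> (\<Sum>i\<in>I. card {s. s < a \<and> s \<in> B i})" for a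
  proof -
    have "{s. s < a \<and> s \<in> (\<Union>i\<in>I. B i)} = (\<Union>i\<in>I. {s. s < a \<and> s \<in> B i})" by auto
    then show ?thesis using card_UN_le[OF assms(1)] by simp
  qed
  have "real (card {s. s < a \<and> s \<in> (\<Union>i\<in>I. B i)}) / real a
      \<le> real (\<Sum>i\<in>I. card {s. s < a \<and> s \<in> B i}) / real a" for a
    by (intro divide_right_mono) (simp only: of_nat_le_iff card_le, simp)
  then have "real (card {s. s < a \<and> s \<in> (\<Union>i\<in>I. B i)}) / real a
      \<le> (\<Sum>i\<in>I. real (card {s. s < a \<and> s \<in> B i}) / real a)" for a
    by (simp add: sum_divide_distrib)
  then show "\<forall>\<^sub>F a in sequentially. real (card {s. s < a \<and> s \<in> (\<Union>i\<in>I. B i)}) / real a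
      \<le> (\<Sum>i\<in>I. real (card {s. s < a \<and> s \<in> B i}) / real a)"
    by simp
  show "(\<lambda>a. real (card {s. s < a \<and> s \<in> B i}) / real a) \<longlonglongrightarrow> 0" if "i \<in> I" for i
    using assms(2)[OF that] unfolding zero_density_def .
qed simp

lemma card_mod_preimage_le:
  assumes "P > 0" and "finite R"
  shows "card {s. s < a \<and> s mod P \<in> R} \<le> (a div P + 1) * card R"
proof -
  have "inj_on (\<lambda>s. (s div P, s mod P)) {s. s < a \<and> s mod P \<in> R}"
  proof (rule inj_onI)
    fix s s' assume "(s div P, s mod P) = (s' div P, s' mod P)"
    then show "s = s'"
      by (metis div_mult_mod_eq prod.inject)
  qed
  moreover have "(\<lambda>s. (s div P, s mod P)) ` {s. s < a \<and> s mod P \<in> R} \<subseteq> {..a div P} \<times> R"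
    by (auto intro: div_le_mono)
  ultimately have "card {s. s < a \<and> s mod P \<in> R} \<le> card ({..a div P} \<times> R)"
    using assms(2) by (intro card_inj_on_le) auto
  then show ?thesis by (simp add: card_cartesian_product)
qed

lemma zero_density_if_periodic_cover:
  assumes cover: "\<And>\<epsilon>. \<epsilon> > 0 \<Longrightarrow>
    \<exists>P R. P > 0 \<and> finite R \<and> (\<forall>s\<in>B. s mod P \<in> R) \<and> real (card R) \<le> \<epsilon> * real P"
  shows "zero_density B"
  unfolding zero_density_def
proof (rule LIMSEQ_I)
  fix r :: real assume "r > 0"
  then obtain P R where "P > 0" "finite R" and B: "\<forall>s\<in>B. s mod P \<in> R"
    and R: "real (card R) \<le> r / 3 * real P"
    using cover[of "r / 3"] by auto
  have "norm (real (card {s. s < a \<and> s \<in> B}) / real a - 0) < r" if "a \<ge> P" for a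
  proof -
    have "card {s. s < a \<and> s \<in> B} \<le> card {s. s < a \<and> s mod P \<in> R}"
      using B by (intro card_mono) auto
    also have "\<dots> \<le> (a div P + 1) * card R"
      by (rule card_mod_preimage_le[OF \<open>P > 0\<close> \<open>finite R\<close>])
    finally have "real (card {s. s < a \<and> s \<in> B}) \<le> real (a div P + 1) * real (card R)"
      by (simp only: of_nat_le_iff flip: of_nat_mult)
    also have "\<dots> \<le> real (a div P + 1) * (r / 3 * real P)"
      using R by (intro mult_left_mono) auto
    also have "\<dots> = r / 3 * (real (a div P * P) + real P)"
      by (simp add: algebra_simps)
    also have "\<dots> \<le> r / 3 * (2 * real a)"
    proof -
      have "real (a div P * P) \<le> real a"
        by (simp only: of_nat_le_iff div_times_less_eq_dividend)
      then show ?thesis using \<open>r > 0\<close> that by (intro mult_left_mono) auto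
    qed
    also have "\<dots> < r * real a"
      using \<open>r > 0\<close> that \<open>P > 0\<close> by simp
    finally show ?thesis
      using that \<open>P > 0\<close> by (simp add: divide_less_eq)
  qed
  then show "\<exists>a0. \<forall>a\<ge>a0. norm (real (card {s. s < a \<and> s \<in> B}) / real a - 0) < r"
    by blast
qed

section \<open>Big digits of powers\<close>

text \<open>The residue \<open>r mod T\<close> determines \<open>b\<^sup>r mod p\<^sup>e\<close>, so the pair below determines
  \<open>b\<^sup>r mod p\<^sup>e\<^sup>+\<^sup>N\<close>, which in turn determines \<open>r\<close> within one period \<open>T p\<^sup>N\<close>.\<close>

lemma inj_on_power_residue_digits:
  fixes b p :: nat
  assumes p: "prime p" and "e \<ge> 2" and "\<not> p dvd u" and T: "b ^ T = 1 + p ^ e * u"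
  shows "inj_on (\<lambda>r. (r mod T, b ^ r div p ^ e mod p ^ N)) {..<T * p ^ N}"
proof -
  note shift = cong_power_add_mult_iff[OF assms]
  have "r = r'" if le: "r \<le> r'" and bound: "r' < T * p ^ N" and res: "r mod T = r' mod T"
    and digits: "b ^ r div p ^ e mod p ^ N = b ^ r' div p ^ e mod p ^ N" for r r'
  proof -
    obtain c where c: "r' = r + T * c"
      using le res by (metis mod_eq_dvd_iff_nat dvd_def le_add_diff_inverse)
    have "[b ^ r' = b ^ r] (mod p ^ e)"
      using shift[of r c 0] by (simp add: c)
    with digits have "[b ^ r' = b ^ r] (mod p ^ e * p ^ N)"
      unfolding cong_mult_iff_cong_div by (simp add: cong_def)
    then have "p ^ N dvd c"
      using shift[of r c N] by (simp add: c power_add)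
    moreover have "T * c < T * p ^ N"
      using bound unfolding c by linarith
    then have "c < p ^ N" by simp
    ultimately have "c = 0"
      using nat_dvd_not_less by blast
    then show "r = r'"
      using c by simp
  qed
  then show ?thesis
    by (intro inj_onI) (metis lessThan_iff linorder_le_cases prod.inject)
qed

lemma power_digits_mod_period:
  fixes b p :: nat
  assumes "prime p" and "e \<ge> 2" and "\<not> p dvd u" and "b ^ T = 1 + p ^ e * u"
  shows "b ^ (s mod (T * p ^ N)) div p ^ e mod p ^ N = b ^ s div p ^ e mod p ^ N"
proof -
  have "s = s mod (T * p ^ N) + T * (p ^ N * (s div (T * p ^ N)))"
    using mod_div_mult_eq[of s "T * p ^ N"] by (simp add: mult_ac)
  then have "[b ^ s = b ^ (s mod (T * p ^ N))] (mod p ^ e * p ^ N)"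
    using cong_power_add_mult_iff[OF assms, of "s mod (T * p ^ N)" _ N]
    by (metis dvd_triv_left power_add)
  then show ?thesis
    unfolding cong_mult_iff_cong_div by (simp add: cong_def)
qed

lemma card_power_digits_in_le:
  fixes b p :: nat
  assumes "prime p" and "e \<ge> 2" and "\<not> p dvd u" and "b ^ T = 1 + p ^ e * u"
    and "finite W"
  shows "card {r. r < T * p ^ N \<and> b ^ r div p ^ e mod p ^ N \<in> W} \<le> T * card W"
proof -
  let ?R = "{r. r < T * p ^ N \<and> b ^ r div p ^ e mod p ^ N \<in> W}"
  have "inj_on (\<lambda>r. (r mod T, b ^ r div p ^ e mod p ^ N)) ?R"
    using inj_on_power_residue_digits[OF assms(1-4), of N] by (rule inj_on_subset) auto
  moreover have "(\<lambda>r. (r mod T, b ^ r div p ^ e mod p ^ N)) ` ?R \<subseteq> {..<T} \<times> W"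
    by (auto intro!: mod_less_divisor gr0I)
  ultimately have "card ?R \<le> card ({..<T} \<times> W)"
    using assms(5) by (intro card_inj_on_le) auto
  then show ?thesis by (simp add: card_cartesian_product)
qed

lemma zero_density_few_big_digits_power:
  fixes b p k :: nat
  assumes p: "prime p" "p \<noteq> 2" and b: "b > 1" "coprime b p"
  shows "zero_density {s. \<forall>N. big_digits p N (b ^ s) < k}"
proof -
  obtain T e u where "T > 0" and lte: "e \<ge> 2" "\<not> p dvd u" "b ^ T = 1 + p ^ e * u"
    using power_eq_one_plus_prime_power[OF p(1) b(2,1)] .
  have "p > 2" using prime_gt_1_nat[OF p(1)] p(2) by linarith
  define q where "q = big_digit_density p"
  show ?thesis
  proof (rule zero_density_if_periodic_cover)
    fix \<epsilon> :: real assume "\<epsilon> > 0"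
    have "(\<lambda>N. binomial_lower_tail q N k) \<longlonglongrightarrow> 0"
      unfolding q_def using \<open>p > 2\<close>
      by (intro binomial_lower_tail_tendsto_0 big_digit_density_pos big_digit_density_le_1)
    then have "eventually (\<lambda>N. binomial_lower_tail q N k < \<epsilon>) sequentially"
      using \<open>\<epsilon> > 0\<close> by (rule order_tendstoD(2))
    then obtain N where tail: "binomial_lower_tail q N k < \<epsilon>"
      unfolding eventually_sequentially by blast
    define P where "P = T * p ^ N"
    define R where "R = {r. r < P \<and> b ^ r div p ^ e mod p ^ N \<in> few_big_digits p N k}"
    have "P > 0" unfolding P_def using \<open>T > 0\<close> p(1) prime_gt_0_nat by simp
    have cover: "s mod P \<in> R" if "\<forall>N. big_digits p N (b ^ s) < k" for s
    proof -
      have "big_digits p N (b ^ s div p ^ e mod p ^ N) < k"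
        using that[rule_format, of "e + N"] by (simp add: big_digits_add big_digits_mod_power)
      then show ?thesis
        using \<open>P > 0\<close> prime_gt_0_nat[OF p(1)] power_digits_mod_period[OF p(1) lte, of s N]
        unfolding R_def few_big_digits_def P_def by simp
    qed
    have "real (card R) \<le> real T * real (card (few_big_digits p N k))"
      using card_power_digits_in_le[OF p(1) lte, of "few_big_digits p N k" N]
      unfolding R_def P_def by (simp only: of_nat_le_iff flip: of_nat_mult) simp
    also have "\<dots> \<le> real T * (real p ^ N * binomial_lower_tail q N k)"
      using card_few_big_digits_le[of p N k] \<open>p > 2\<close> unfolding q_def
      by (intro mult_left_mono) auto
    also have "\<dots> \<le> real T * (real p ^ N * \<epsilon>)"
      using tail by (intro mult_left_mono) auto
    also have "\<dots> = \<epsilon> * real P"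
      unfolding P_def by simp
    finally show "\<exists>P R. P > 0 \<and> finite R
        \<and> (\<forall>s\<in>{s. \<forall>N. big_digits p N (b ^ s) < k}. s mod P \<in> R) \<and> real (card R) \<le> \<epsilon> * real P"
      using \<open>P > 0\<close> cover by (intro exI[of _ P] exI[of _ R]) (auto simp: R_def)
  qed
qed

lemma zero_density_not_prime_power_dvd_central_binomial:
  fixes b p k :: nat
  assumes "prime p" and "p \<noteq> 2" and "b > 1" and "coprime b p"
  shows "zero_density {s. \<not> p ^ k dvd (2 * b ^ s choose b ^ s)}"
proof (rule zero_density_subset[OF zero_density_few_big_digits_power[OF assms]])
  show "{s. \<not> p ^ k dvd (2 * b ^ s choose b ^ s)} \<subseteq> {s. \<forall>N. big_digits p N (b ^ s) < k}"
  proof (intro subsetI CollectI allI)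
    fix s N assume s: "s \<in> {s. \<not> p ^ k dvd (2 * b ^ s choose b ^ s)}"
    show "big_digits p N (b ^ s) < k"
    proof (rule ccontr)
      assume "\<not> big_digits p N (b ^ s) < k"
      then have "p ^ k dvd p ^ big_digits p N (b ^ s)"
        by (intro le_imp_power_dvd) simp
      also have "\<dots> dvd (2 * b ^ s choose b ^ s)"
        using assms(1) by (rule prime_power_big_digits_dvd_central_binomial)
      finally show False using s by simp
    qed
  qed
qed

lemma dvd_if_prime_factor_powers_dvd:
  fixes x y :: nat
  assumes "x \<noteq> 0" and "\<And>p. p \<in> prime_factors x \<Longrightarrow> p ^ multiplicity p x dvd y"
  shows "x dvd y"
proof (cases "y = 0")
  case False
  show ?thesis
  proof (rule multiplicity_le_imp_dvd[OF assms(1)])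
    fix p :: nat assume "prime p"
    show "multiplicity p x \<le> multiplicity p y"
    proof (cases "p dvd x")
      case True
      with \<open>prime p\<close> assms(1) have "p ^ multiplicity p x dvd y"
        by (intro assms(2)) (simp add: in_prime_factors_iff)
      with False \<open>prime p\<close> show ?thesis
        by (intro multiplicity_geI) (auto dest: not_prime_unit)
    qed (simp add: not_dvd_imp_multiplicity_0)
  qed
qed simp

theorem corollary3p3:
  fixes m :: nat
  assumes "odd m" and "m > 0"
  shows "(\<lambda>a::nat. real (card {s::nat. s < a \<and> \<not> m dvd ((2::nat) ^ (s + 1) choose 2 ^ s)}) / real a)
           \<longlonglongrightarrow> 0"
proof -
  let ?C = "\<lambda>s. (2::nat) ^ (s + 1) choose 2 ^ s"
  have "zero_density (\<Union>p\<in>prime_factors m. {s. \<not> p ^ multiplicity p m dvd ?C s})"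
  proof (rule zero_density_UN)
    fix p assume "p \<in> prime_factors m"
    then have "prime p" and "p dvd m" by auto
    with assms(1) have "p \<noteq> 2" by auto
    with \<open>prime p\<close> have "coprime 2 p"
      using primes_coprime[OF two_is_prime_nat] by blast
    with \<open>prime p\<close> \<open>p \<noteq> 2\<close> show "zero_density {s. \<not> p ^ multiplicity p m dvd ?C s}"
      using zero_density_not_prime_power_dvd_central_binomial[of p 2 "multiplicity p m"] by simp
  qed simp
  moreover have "{s. \<not> m dvd ?C s} \<subseteq> (\<Union>p\<in>prime_factors m. {s. \<not> p ^ multiplicity p m dvd ?C s})"
  proof
    fix s assume "s \<in> {s. \<not> m dvd ?C s}"
    then show "s \<in> (\<Union>p\<in>prime_factors m. {s. \<not> p ^ multiplicity p m dvd ?C s})"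
      using dvd_if_prime_factor_powers_dvd[of m "?C s"] assms(2) by auto
  qed
  ultimately have "zero_density {s. \<not> m dvd ?C s}"
    by (rule zero_density_subset)
  then show ?thesis
    unfolding zero_density_def by simp
qed

end
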